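(* Let $d\in\mathbb{N}$, $\alpha\in[0,1)$, $\delta>0$, $\lambda>0$, $\eta\in\mathbb{R}^{d}$, and let $\rho\in\mathbb{R}^{d\times d}$ be a symmetric positive definite matrix. For $x,y\in\mathbb{R}^d$ put $\langle x,y\rangle_\rho=x^{\top}\rho^{-1}y$ and $\|x\|_\rho=\sqrt{\langle x,x\rangle_\rho}$, and set $c_1=\sqrt{\|\eta\|_\rho^{2}+2\lambda}$. Consider the (Normal Tempered Stable) L\'evy density on $\mathbb{R}^d_*=\mathbb{R}^d\setminus\{0\}$ \[ \ell(z)=2\delta\sqrt{\frac{c_1^{\,2\alpha+d}}{(2\pi)^{d}\det[\rho]}}\;\frac{K_{\alpha+\frac{d}{2}}\!\left(c_1\|z\|_\rho\right)}{\|z\|_\rho^{\alpha+\frac{d}{2}}}\;e^{\langle\eta,z\rangle_\rho},\qquad z\in\mathbb{R}^d_*, \] where $K_\nu(\tau)=\frac12\int_0^\infty y^{\nu-1}e^{-\frac12\tau(y+y^{-1})}\,dy$ ($\tau>0$) is the modified Bessel function of the second kind. Define \[ A_\ell=2\alpha,\qquad B_\ell=\sqrt{\|\eta\|_\rho^{2}+2\lambda}-\|\eta\|_\rho,\qquad C_\ell(h)=\frac{2^{\alpha}\delta\,\Gamma\!\left(\alpha+\frac d2\right)}{\sqrt{\pi^{d}\det[\rho]}}\,e^{h\|\eta\|_\rho}\quad(h>0). \] Then for every $h>0$ and every $z\in\mathbb{R}^d_*$ with $\|z\|_\rho\in(0,h]$ one has $\ell(z)\le C_\ell(h)\,\|z\|_\rho^{-A_\ell-d}$,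 and $\ell(z)=O\!\left(e^{-B_\ell\|z\|_\rho}\right)$ as $\|z\|_\rho\to\infty$.
   Context: The density $\ell$ is the L\'evy measure of the $d$-dimensional Normal Tempered Stable process $L(t)=B(G(t))-\mathbb{E}[B(G(t))]$, where $B(t)=\eta t+\sqrt{\rho}\,W(t)$ with $W$ a standard $d$-dimensional Wiener process and $G$ an independent tempered stable subordinator with L\'evy density $\mathbb{I}_{x>0}\,\delta e^{-\lambda x}x^{-1-\alpha}$. $\Gamma$ denotes the Gamma function. *)

theory Defs
  imports "HOL-Analysis.Analysis"
begin

definition inner_rho :: "real^'n^'n \<Rightarrow> real^'n \<Rightarrow> real^'n \<Rightarrow> real" where
  "inner_rho rho x y = x \<bullet> (matrix_inv rho *v y)"

definition norm_rho :: "real^'n^'n \<Rightarrow> real^'n \<Rightarrow> real" where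
  "norm_rho rho x = sqrt (inner_rho rho x x)"

definition besselK :: "real \<Rightarrow> real \<Rightarrow> real" where
  "besselK nu tau = 1/2 * integral {0<..} (\<lambda>y. y powr (nu - 1) * exp (- tau / 2 * (y + 1 / y)))"

definition sym_pos_def :: "real^'n^'n \<Rightarrow> bool" where
  "sym_pos_def rho \<longleftrightarrow> transpose rho = rho \<and> (\<forall>x. x \<noteq> 0 \<longrightarrow> x \<bullet> (rho *v x) > 0)"

definition nts_density ::
  "real \<Rightarrow> real \<Rightarrow> real \<Rightarrow> real^'n \<Rightarrow> real^'n^'n \<Rightarrow> real^'n \<Rightarrow> real" where
  "nts_density \<alpha> \<delta> lam \<eta> rho z =
     (let d = real CARD('n); c1 = sqrt ((norm_rho rho \<eta>)\<^sup>2 + 2 * lam) in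
      2 * \<delta> * sqrt (c1 powr (2 * \<alpha> + d) / ((2 * pi) ^ CARD('n) * det rho))
        * besselK (\<alpha> + d / 2) (c1 * norm_rho rho z) / norm_rho rho z powr (\<alpha> + d / 2)
        * exp (inner_rho rho \<eta> z))"

end

theory Submission
  imports Defs
begin

text \<open>Both bounds come from two elementary estimates of the integral defining \<open>K\<^sub>\<nu>\<close>, each
  reducing it to a rescaled Gamma integral. Dropping \<open>1/y\<close> from the exponent gives
  \<open>K\<^sub>\<nu>(\<tau>) \<le> 2 powr (\<nu> - 1) \<Gamma>(\<nu>) / \<tau> powr \<nu>\<close>, which near the origin makes \<open>\<ell>(z)\<close> a
  multiple of \<open>\<parallel>z\<parallel>\<^sub>\<rho> powr (-2\<nu>)\<close>. For \<open>\<tau> \<ge> 1\<close> the inequality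
  \<open>\<tau> (y + 1/y) / 2 \<ge> \<tau> - 1 + y/2\<close> gives \<open>K\<^sub>\<nu>(\<tau>) = O(exp (-\<tau>))\<close>, hence decay like
  \<open>exp (-c\<^sub>1 \<parallel>z\<parallel>\<^sub>\<rho>)\<close>. In both regimes the tilt \<open>exp \<langle>\<eta>,z\<rangle>\<^sub>\<rho>\<close> is controlled by the
  Cauchy-Schwarz inequality \<open>\<langle>\<eta>,z\<rangle>\<^sub>\<rho> \<le> \<parallel>\<eta>\<parallel>\<^sub>\<rho> \<parallel>z\<parallel>\<^sub>\<rho>\<close> for the positive definite
  form given by \<open>\<rho>\<close>.\<close>

lemma has_integral_powr_exp_scaled:
  fixes \<nu> s :: real
  assumes "\<nu> > 0" and "s > 0"
  shows "((\<lambda>y. y powr (\<nu> - 1) * exp (- (s * y))) has_integral Gamma \<nu> / s powr \<nu>) {0<..}"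
proof -
  define f where "f t = t powr (\<nu> - 1) / exp t" for t :: real
  have "(f has_integral Gamma \<nu>) {0..}"
    unfolding f_def by (rule Gamma_integral_real) fact
  then have f: "(f has_integral Gamma \<nu>) {0<..}"
    by (subst has_integral_spike_set_eq[where T = "{0..}"])
      (auto simp: f_def intro!: negligible_subset[of "{}"])
  have "f absolutely_integrable_on {0<..}"
    using f by (intro nonnegative_absolutely_integrable_1) (auto simp: f_def)
  moreover have "(*) s ` {0<..} = {0<..}"
    using \<open>s > 0\<close> by (auto simp: image_iff intro!: bexI[of _ "x / s" for x])
  moreover have "inj_on ((*) s) {0<..}"
    using \<open>s > 0\<close> by (auto intro: inj_onI)
  ultimately have "(\<lambda>y. \<bar>s\<bar> * f (s * y)) absolutely_integrable_on {0<..} \<and>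
      integral {0<..} (\<lambda>y. \<bar>s\<bar> * f (s * y)) = Gamma \<nu>"
    using has_absolute_integral_change_of_variables_1'[of "{0<..}" "(*) s" "\<lambda>_. s" f "Gamma \<nu>"] f
    by (auto intro!: derivative_eq_intros simp: integral_unique)
  then have "((\<lambda>y. s * f (s * y)) has_integral Gamma \<nu>) {0<..}"
    using \<open>s > 0\<close> by (auto simp: has_integral_iff dest: set_lebesgue_integral_eq_integral(1))
  then have "((\<lambda>y. s * f (s * y) / s powr \<nu>) has_integral Gamma \<nu> / s powr \<nu>) {0<..}"
    by (rule has_integral_divide)
  then show ?thesis
    by (rule has_integral_eq[rotated])
      (use \<open>s > 0\<close> in \<open>auto simp: f_def powr_mult powr_diff exp_minus field_simps\<close>)
qed

lemma integral_le_dominating_integral: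
  fixes f g :: "'a::euclidean_space \<Rightarrow> real"
  assumes "(g has_integral I) S" and "\<And>x. x \<in> S \<Longrightarrow> 0 \<le> f x \<and> f x \<le> g x"
  shows "integral S f \<le> I"
proof (cases "f integrable_on S")
  case True
  then show ?thesis
    using assms by (metis has_integral_le integrable_integral)
next
  case False
  then show ?thesis
    using assms by (metis has_integral_nonneg not_integrable_integral order_trans)
qed

lemma besselK_nonneg: "0 \<le> besselK \<nu> \<tau>"
  unfolding besselK_def
  by (cases "(\<lambda>y. y powr (\<nu> - 1) * exp (- \<tau> / 2 * (y + 1 / y))) integrable_on {0<..}")
    (auto intro: integral_nonneg simp: not_integrable_integral)

lemma besselK_le_Gamma:
  assumes "\<nu> > 0" and "\<tau> > 0"
  shows "besselK \<nu> \<tau> \<le> 2 powr (\<nu> - 1) * Gamma \<nu> / \<tau> powr \<nu>"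
proof -
  have "integral {0<..} (\<lambda>y. y powr (\<nu> - 1) * exp (- \<tau> / 2 * (y + 1 / y)))
      \<le> Gamma \<nu> / (\<tau> / 2) powr \<nu>"
  proof (rule integral_le_dominating_integral[OF has_integral_powr_exp_scaled])
    fix y :: real
    assume "y \<in> {0<..}"
    then have "exp (- \<tau> / 2 * (y + 1 / y)) \<le> exp (- (\<tau> / 2 * y))"
      using \<open>\<tau> > 0\<close> by (simp add: field_simps)
    then show "0 \<le> y powr (\<nu> - 1) * exp (- \<tau> / 2 * (y + 1 / y)) \<and>
        y powr (\<nu> - 1) * exp (- \<tau> / 2 * (y + 1 / y)) \<le> y powr (\<nu> - 1) * exp (- (\<tau> / 2 * y))"
      by (simp add: mult_left_mono)
  qed (use assms in auto)
  then show ?thesis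
    using assms by (simp add: besselK_def powr_diff powr_divide field_simps)
qed

lemma besselK_le_exp:
  assumes "\<nu> > 0" and "\<tau> \<ge> 1"
  shows "besselK \<nu> \<tau> \<le> 2 powr (\<nu> - 1) * exp 1 * Gamma \<nu> * exp (- \<tau>)"
proof -
  have exponent_le: "- \<tau> / 2 * (y + 1 / y) \<le> 1 - \<tau> - y / 2" if "y > 0" for y :: real
  proof -
    have "0 \<le> (y - 1)\<^sup>2 / y"
      using that by simp
    then have "0 \<le> y + 1 / y - 2"
      using that by (simp add: power2_eq_square field_simps)
    have "y - 2 \<le> y + 1 / y - 2"
      using that by simp
    also have "\<dots> \<le> \<tau> * (y + 1 / y - 2)"
      using \<open>0 \<le> y + 1 / y - 2\<close> \<open>\<tau> \<ge> 1\<close> mult_right_mono[of 1 \<tau>] by simp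
    finally show ?thesis
      by (simp add: algebra_simps add_divide_distrib)
  qed
  have "integral {0<..} (\<lambda>y. y powr (\<nu> - 1) * exp (- \<tau> / 2 * (y + 1 / y)))
      \<le> exp (1 - \<tau>) * (Gamma \<nu> / (1 / 2) powr \<nu>)"
  proof (rule integral_le_dominating_integral[OF has_integral_mult_right[OF has_integral_powr_exp_scaled]])
    fix y :: real
    assume "y \<in> {0<..}"
    then have "exp (- \<tau> / 2 * (y + 1 / y)) \<le> exp (1 - \<tau>) * exp (- (1 / 2 * y))"
      using exponent_le by (simp flip: exp_add)
    then have "y powr (\<nu> - 1) * exp (- \<tau> / 2 * (y + 1 / y))
        \<le> y powr (\<nu> - 1) * (exp (1 - \<tau>) * exp (- (1 / 2 * y)))"
      by (rule mult_left_mono) simp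
    then show "0 \<le> y powr (\<nu> - 1) * exp (- \<tau> / 2 * (y + 1 / y)) \<and>
        y powr (\<nu> - 1) * exp (- \<tau> / 2 * (y + 1 / y))
          \<le> exp (1 - \<tau>) * (y powr (\<nu> - 1) * exp (- (1 / 2 * y)))"
      by (simp add: mult.left_commute)
  qed (use assms in auto)
  then have "besselK \<nu> \<tau> \<le> 1 / 2 * (exp (1 - \<tau>) * (Gamma \<nu> / (1 / 2) powr \<nu>))"
    by (simp add: besselK_def)
  also have "\<dots> = 2 powr (\<nu> - 1) * exp 1 * Gamma \<nu> * exp (- \<tau>)"
    by (simp add: exp_diff exp_minus powr_diff powr_divide field_simps)
  finally show ?thesis .
qed

lemma sym_pos_def_Cauchy_Schwarz:
  fixes Q :: "real^'n^'n"
  assumes "sym_pos_def Q"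
  shows "x \<bullet> (Q *v y) \<le> sqrt (x \<bullet> (Q *v x)) * sqrt (y \<bullet> (Q *v y))"
proof -
  have sym: "transpose Q = Q" and pd: "\<And>x. x \<noteq> 0 \<Longrightarrow> 0 < x \<bullet> (Q *v x)"
    using assms by (auto simp: sym_pos_def_def)
  have psd: "0 \<le> u \<bullet> (Q *v u)" for u
    using pd[of u] by (cases "u = 0") auto
  define a b c where "a = x \<bullet> (Q *v x)" and "b = x \<bullet> (Q *v y)" and "c = y \<bullet> (Q *v y)"
  have "y \<bullet> (Q *v x) = b"
    using sym by (metis b_def dot_lmul_matrix inner_commute vector_transpose_matrix)
  then have quadratic: "0 \<le> a + 2 * t * b + t\<^sup>2 * c" for t
    using psd[of "x + t *\<^sub>R y"]
    by (simp add: a_def b_def c_def algebra_simps power2_eq_square)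
  have "b\<^sup>2 \<le> a * c"
  proof (cases "y = 0")
    case True
    then show ?thesis by (simp add: b_def c_def)
  next
    case False
    then have "c > 0"
      using pd by (simp add: c_def)
    with quadratic[of "- b / c"] show ?thesis
      by (simp add: power2_eq_square field_simps)
  qed
  then have "\<bar>b\<bar> \<le> sqrt a * sqrt c"
    by (metis real_sqrt_abs real_sqrt_le_mono real_sqrt_mult)
  then show ?thesis
    by (simp add: a_def b_def c_def)
qed

lemma pos_definite_det_pos:
  fixes Q :: "real^'n^'n"
  assumes pd: "\<And>x. x \<noteq> 0 \<Longrightarrow> 0 < x \<bullet> (Q *v x)"
  shows "det Q > 0"
proof (rule ccontr)
  assume "\<not> det Q > 0"
  \<comment> \<open>Along the segment from the identity to \<open>Q\<close> every matrix is positive definite, but the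
     determinant would have to vanish somewhere on it.\<close>
  define M where "M t = (1 - t) *\<^sub>R mat 1 + t *\<^sub>R Q" for t :: real
  have "continuous_on {0..1} (\<lambda>t. det (M t))"
    unfolding det_def M_def by (simp add: mat_def) (intro continuous_intros)
  moreover have "M 0 = mat 1" "M 1 = Q"
    by (auto simp: M_def)
  ultimately obtain t where t: "0 \<le> t" "t \<le> 1" "det (M t) = 0"
    using IVT2'[of "\<lambda>t. det (M t)" 1 0 0] \<open>\<not> det Q > 0\<close> by auto
  then obtain x where x: "x \<noteq> 0" "M t *v x = 0"
    by (metis invertible_det_nz invertible_left_inverse matrix_left_invertible_ker)
  have "x \<bullet> (M t *v x) = (1 - t) * (x \<bullet> x) + t * (x \<bullet> (Q *v x))"
    by (simp add: M_def algebra_simps flip: scaleR_matrix_vector_assoc)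
  also have "\<dots> > 0"
    using pd[OF x(1)] t x(1)
    by (cases "t = 0") (auto intro: add_nonneg_pos)
  finally show False
    using x by simp
qed

lemma sym_pos_def_det_pos: "sym_pos_def rho \<Longrightarrow> 0 < det rho"
  by (rule pos_definite_det_pos) (simp add: sym_pos_def_def)

lemma sym_pos_def_mult_matrix_inv:
  fixes rho :: "real^'n^'n"
  assumes "sym_pos_def rho"
  shows "rho *v (matrix_inv rho *v x) = x"
proof -
  have "invertible rho"
    using sym_pos_def_det_pos[OF assms] by (simp add: invertible_det_nz)
  then have "rho ** matrix_inv rho = mat 1"
    unfolding invertible_def matrix_inv_def by (rule someI2_ex) auto
  then show ?thesis
    by (simp add: matrix_vector_mul_assoc)
qed

lemma inner_rho_conv_sym_pos_def_form:
  fixes rho :: "real^'n^'n"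
  assumes "sym_pos_def rho"
  shows "inner_rho rho x y = (matrix_inv rho *v x) \<bullet> (rho *v (matrix_inv rho *v y))"
proof -
  have "transpose rho = rho"
    using assms by (simp add: sym_pos_def_def)
  then show ?thesis
    unfolding inner_rho_def
    by (metis assms sym_pos_def_mult_matrix_inv dot_lmul_matrix vector_transpose_matrix)
qed

lemma norm_rho_pos:
  fixes rho :: "real^'n^'n"
  assumes "sym_pos_def rho" and "x \<noteq> 0"
  shows "0 < norm_rho rho x"
proof -
  have "matrix_inv rho *v x \<noteq> 0"
    using assms sym_pos_def_mult_matrix_inv[of rho x] by auto
  then show ?thesis
    using assms unfolding norm_rho_def inner_rho_conv_sym_pos_def_form[OF assms(1)]
    by (simp add: sym_pos_def_def)
qed

lemma norm_rho_nonneg: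
  fixes rho :: "real^'n^'n"
  assumes "sym_pos_def rho"
  shows "0 \<le> norm_rho rho x"
  using norm_rho_pos[OF assms, of x] by (cases "x = 0") (auto simp: norm_rho_def inner_rho_def)

lemma inner_rho_le_norm_rho:
  fixes rho :: "real^'n^'n"
  assumes "sym_pos_def rho"
  shows "inner_rho rho x y \<le> norm_rho rho x * norm_rho rho y"
  using sym_pos_def_Cauchy_Schwarz[OF assms]
  by (simp add: norm_rho_def inner_rho_conv_sym_pos_def_form[OF assms])

lemma nts_density_eq:
  fixes \<alpha> \<delta> lam :: real and \<eta> :: "real^'n" and rho :: "real^'n^'n"
  defines "\<nu> \<equiv> \<alpha> + real CARD('n) / 2" and "c \<equiv> sqrt ((norm_rho rho \<eta>)\<^sup>2 + 2 * lam)"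
  shows "nts_density \<alpha> \<delta> lam \<eta> rho z =
    2 powr (1 - real CARD('n) / 2) * \<delta> * c powr \<nu> / sqrt (pi ^ CARD('n) * det rho)
      * besselK \<nu> (c * norm_rho rho z) * (exp (inner_rho rho \<eta> z) / norm_rho rho z powr \<nu>)"
proof -
  have c_powr: "c powr (2 * \<alpha> + real CARD('n)) = (c powr \<nu>)\<^sup>2"
    by (simp add: \<nu>_def power2_eq_square flip: powr_add)
  have two_pi: "(2 * pi) ^ CARD('n) * det rho = (2 powr (real CARD('n) / 2))\<^sup>2 * (pi ^ CARD('n) * det rho)"
    by (simp add: power2_eq_square power_mult_distrib powr_realpow flip: powr_add)
  have "sqrt (c powr (2 * \<alpha> + real CARD('n)) / ((2 * pi) ^ CARD('n) * det rho))
      = c powr \<nu> / (2 powr (real CARD('n) / 2) * sqrt (pi ^ CARD('n) * det rho))"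
    unfolding c_powr two_pi by (simp add: real_sqrt_divide real_sqrt_mult)
  then show ?thesis
    by (simp add: nts_density_def Let_def c_def \<nu>_def powr_diff)
qed

lemma nts_density_nonneg:
  fixes \<eta> :: "real^'n" and rho :: "real^'n^'n"
  assumes "0 \<le> \<delta>" and "sym_pos_def rho"
  shows "0 \<le> nts_density \<alpha> \<delta> lam \<eta> rho z"
  unfolding nts_density_eq using assms(1) sym_pos_def_det_pos[OF assms(2)] besselK_nonneg
  by (intro mult_nonneg_nonneg divide_nonneg_nonneg) auto

lemma nts_density_le_near_origin:
  fixes \<alpha> \<delta> lam h :: real and \<eta> z :: "real^'n" and rho :: "real^'n^'n"
  assumes "\<alpha> + real CARD('n) / 2 > 0" and "0 \<le> \<delta>" and "0 < lam" and "sym_pos_def rho"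
    and "z \<noteq> 0" and "norm_rho rho z \<le> h"
  shows "nts_density \<alpha> \<delta> lam \<eta> rho z
    \<le> 2 powr \<alpha> * \<delta> * Gamma (\<alpha> + real CARD('n) / 2) / sqrt (pi ^ CARD('n) * det rho)
        * exp (h * norm_rho rho \<eta>) * norm_rho rho z powr (- (2 * \<alpha>) - real CARD('n))"
proof -
  define d \<nu> c r S where "d = real CARD('n)" and "\<nu> = \<alpha> + d / 2"
    and "c = sqrt ((norm_rho rho \<eta>)\<^sup>2 + 2 * lam)" and "r = norm_rho rho z"
    and "S = sqrt (pi ^ CARD('n) * det rho)"
  define A where "A = 2 powr (1 - d / 2) * \<delta> * c powr \<nu> / S"
  have "\<nu> > 0" "c > 0" "r > 0"
    using assms norm_rho_pos by (auto simp: \<nu>_def d_def c_def r_def add_nonneg_pos)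
  have "S > 0"
    using sym_pos_def_det_pos[OF assms(4)] by (simp add: S_def)
  then have "A \<ge> 0"
    using assms(2) by (simp add: A_def)
  have bessel: "besselK \<nu> (c * r) \<le> 2 powr (\<nu> - 1) * Gamma \<nu> / (c * r) powr \<nu>"
    using besselK_le_Gamma \<open>\<nu> > 0\<close> \<open>c > 0\<close> \<open>r > 0\<close> by simp
  have "inner_rho rho \<eta> z \<le> norm_rho rho \<eta> * h"
    using inner_rho_le_norm_rho[OF assms(4), of \<eta> z]
      mult_left_mono[OF assms(6) norm_rho_nonneg[OF assms(4), of \<eta>]] by simp
  then have exp_factor: "exp (inner_rho rho \<eta> z) / r powr \<nu> \<le> exp (h * norm_rho rho \<eta>) / r powr \<nu>"
    by (simp add: divide_right_mono mult.commute)
  have "nts_density \<alpha> \<delta> lam \<eta> rho z = A * besselK \<nu> (c * r) * (exp (inner_rho rho \<eta> z) / r powr \<nu>)"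
    by (simp add: nts_density_eq A_def d_def \<nu>_def c_def r_def S_def)
  also have "\<dots> \<le> A * (2 powr (\<nu> - 1) * Gamma \<nu> / (c * r) powr \<nu>) * (exp (h * norm_rho rho \<eta>) / r powr \<nu>)"
    using bessel exp_factor \<open>A \<ge> 0\<close> besselK_nonneg Gamma_real_pos[OF \<open>\<nu> > 0\<close>]
    by (intro mult_mono) auto
  also have "\<dots> = 2 powr \<alpha> * \<delta> * Gamma \<nu> / S * exp (h * norm_rho rho \<eta>) * r powr (- (2 * \<alpha>) - d)"
  proof -
    have "2 powr (1 - d / 2) * 2 powr (\<nu> - 1) = 2 powr \<alpha>"
      by (simp add: \<nu>_def flip: powr_add)
    moreover have "r powr (- (2 * \<alpha>) - d) = 1 / (r powr \<nu> * r powr \<nu>)"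
      using powr_minus_divide[of r "2 * \<alpha> + d"] by (simp add: \<nu>_def flip: powr_add)
    ultimately show ?thesis
      using \<open>c > 0\<close> \<open>r > 0\<close> \<open>S > 0\<close> by (simp add: A_def powr_mult field_simps)
  qed
  finally show ?thesis
    by (simp add: d_def \<nu>_def r_def S_def)
qed

lemma nts_density_le_exp_tail:
  fixes \<alpha> \<delta> lam :: real and \<eta> :: "real^'n" and rho :: "real^'n^'n"
  assumes "\<alpha> + real CARD('n) / 2 > 0" and "0 \<le> \<delta>" and "0 < lam" and "sym_pos_def rho"
  shows "\<exists>M R. \<forall>z::real^'n. z \<noteq> 0 \<and> R \<le> norm_rho rho z \<longrightarrow>
    \<bar>nts_density \<alpha> \<delta> lam \<eta> rho z\<bar>
      \<le> M * exp (- (sqrt ((norm_rho rho \<eta>)\<^sup>2 + 2 * lam) - norm_rho rho \<eta>) * norm_rho rho z)"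
proof -
  define d \<nu> c where "d = real CARD('n)" and "\<nu> = \<alpha> + d / 2"
    and "c = sqrt ((norm_rho rho \<eta>)\<^sup>2 + 2 * lam)"
  define A where "A = 2 powr (1 - d / 2) * \<delta> * c powr \<nu> / sqrt (pi ^ CARD('n) * det rho)"
  have "\<nu> > 0" "c > 0"
    using assms by (auto simp: \<nu>_def d_def c_def add_nonneg_pos)
  have "A \<ge> 0"
    using assms(2) sym_pos_def_det_pos[OF assms(4)] by (simp add: A_def)
  have "\<bar>nts_density \<alpha> \<delta> lam \<eta> rho z\<bar>
      \<le> A * (2 powr (\<nu> - 1) * exp 1 * Gamma \<nu>) * exp (- (c - norm_rho rho \<eta>) * norm_rho rho z)"
    if "max 1 (1 / c) \<le> norm_rho rho z" for z
  proof -
    define r where "r = norm_rho rho z"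
    have "r \<ge> 1" "c * r \<ge> 1"
      using that \<open>c > 0\<close> by (auto simp: r_def field_simps)
    have bessel: "besselK \<nu> (c * r) \<le> 2 powr (\<nu> - 1) * exp 1 * Gamma \<nu> * exp (- (c * r))"
      by (rule besselK_le_exp) fact+
    have "1 \<le> r powr \<nu>"
      using \<open>r \<ge> 1\<close> \<open>\<nu> > 0\<close> by (intro ge_one_powr_ge_zero) auto
    then have "exp (inner_rho rho \<eta> z) / r powr \<nu> \<le> exp (inner_rho rho \<eta> z)"
      by (simp add: divide_le_eq)
    also have "\<dots> \<le> exp (norm_rho rho \<eta> * r)"
      using inner_rho_le_norm_rho[OF assms(4), of \<eta> z] by (simp add: r_def)
    finally have exp_factor: "exp (inner_rho rho \<eta> z) / r powr \<nu> \<le> exp (norm_rho rho \<eta> * r)" .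
    have "\<bar>nts_density \<alpha> \<delta> lam \<eta> rho z\<bar> = nts_density \<alpha> \<delta> lam \<eta> rho z"
      using nts_density_nonneg[OF assms(2,4)] by simp
    also have "\<dots> = A * besselK \<nu> (c * r) * (exp (inner_rho rho \<eta> z) / r powr \<nu>)"
      by (simp add: nts_density_eq A_def d_def \<nu>_def c_def r_def)
    also have "\<dots> \<le> A * (2 powr (\<nu> - 1) * exp 1 * Gamma \<nu> * exp (- (c * r))) * exp (norm_rho rho \<eta> * r)"
      using bessel exp_factor \<open>A \<ge> 0\<close> besselK_nonneg Gamma_real_pos[OF \<open>\<nu> > 0\<close>]
      by (intro mult_mono) auto
    also have "\<dots> = A * (2 powr (\<nu> - 1) * exp 1 * Gamma \<nu>) * exp (- (c - norm_rho rho \<eta>) * r)"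
      by (simp add: algebra_simps flip: exp_add)
    finally show ?thesis
      by (simp add: r_def)
  qed
  then show ?thesis
    unfolding c_def by blast
qed

theorem mainTheorem1:
  fixes \<alpha> \<delta> lam :: real and \<eta> :: "real^'n" and rho :: "real^'n^'n"
  assumes "0 \<le> \<alpha>" "\<alpha> < 1" "\<delta> > 0" "lam > 0" "sym_pos_def rho"
  shows "(\<forall>h>0. \<forall>z::real^'n. z \<noteq> 0 \<and> norm_rho rho z \<le> h \<longrightarrow>
            nts_density \<alpha> \<delta> lam \<eta> rho z
              \<le> 2 powr \<alpha> * \<delta> * Gamma (\<alpha> + real CARD('n) / 2)
                  / sqrt (pi ^ CARD('n) * det rho) * exp (h * norm_rho rho \<eta>)
                * norm_rho rho z powr (- (2 * \<alpha>) - real CARD('n)))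
       \<and> (\<exists>M R. \<forall>z::real^'n. z \<noteq> 0 \<and> R \<le> norm_rho rho z \<longrightarrow>
            \<bar>nts_density \<alpha> \<delta> lam \<eta> rho z\<bar>
              \<le> M * exp (- (sqrt ((norm_rho rho \<eta>)\<^sup>2 + 2 * lam) - norm_rho rho \<eta>) * norm_rho rho z))"
proof -
  \<comment> \<open>\<open>\<alpha> < 1\<close> is only needed for \<open>\<ell>\<close> to be a Levy density, not for the bounds.\<close>
  have "\<alpha> + real CARD('n) / 2 > 0"
    using assms(1) by (simp add: add_nonneg_pos)
  moreover have "0 \<le> \<delta>"
    using assms(3) by simp
  ultimately show ?thesis
    using nts_density_le_near_origin nts_density_le_exp_tail assms(4,5) by blast
qed

end
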